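(* Let $\mathcal{T} = \{T_1, \ldots, T_t\}$ be a set of unrooted binary phylogenetic trees on a common leaf set $X$, let $\mathcal{Q}$ be the set of quartets that are incompatible quartets of $T_1$ and $T_i$ for some $2 \le i \le t$, and let $\tilde x$ be an optimal solution of the linear program $$\text{minimize } \sum_{e \in E(T_1)} x_e \quad \text{s.t. } \sum_{e \in L(Q)} x_e \ge 1 \ \ \forall Q \in \mathcal{Q}, \qquad x_e \ge 0\ \ \forall e \in E(T_1).$$ Let $E \subseteq E(T_1)$ be the edge set produced by the following rounding procedure. Root $T_1$ at an arbitrary leaf $r$; for each edge $e$ let $u_e$ be its endpoint on the path from $r$ to the other endpoint $v_e$. Start with $E = \emptyset$. For the current $E$ and each edge $e$, let $D(e)$ be the set of edges $f$ such that $v_e$ lies on the path from $r$ to $v_f$ and the path from $v_e$ to $v_f$ contains no edge of $E$, and let $w(e) = \sum_{f \in D(e)} \tilde x_f$. While there exists an edge $e$ with $w(e) \ge 1/4$ and $w(f) < 1/4$ for all $f \in D(e) \setminus \{e\}$, add one such edge $e$ to $E$ (recomputing $D$ and $w$ afterwards); stop when every edge $e \in E(T_1) \setminus E$ has $w(e) < 1/4$. Then the final set $E$ is a feasible solution of the integer program $$\text{minimize } \sum_{e \in E(T_1)} x_e \quad \text{s.t. } \sum_{e \in L(Q)} x_e \ge 1 \ \ \forall Q \in \mathcal{Q}, \qquad x_e \in \{0,1\}\ \ \forall e \in E(T_1),$$ i.e., $L(Q) \cap E \ne \emptyset$ for every $Q \in \mathcal{Q}$.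
   Context: A (binary) phylogenetic tree on a finite set $X$ is an unrooted tree whose internal vertices have degree 3 and whose leaves are bijectively labelled by $X$. Two phylogenetic trees on $X$ are isomorphic ($\cong$) if there is a graph isomorphism between them fixing every leaf label. For $Y \subseteq X$, $T[Y]$ is the minimal subtree of $T$ connecting the leaves in $Y$, and $T|_Y$ is obtained from $T[Y]$ by suppressing all degree-2 vertices. A quartet is a 4-element subset of $X$; for $Q=\{a,b,c,d\}$, $ab|cd$ is the tree on $Q$ where $a,b$ share a neighbour $u$, $c,d$ share a neighbour $v$, and $u,v$ are adjacent. If $T_1|_Q \cong ab|cd$, $L(Q)$ is the set of edges of $T_1[\{a,b\}] \cup T_1[\{c,d\}]$. $Q$ is an incompatible quartet of $T_1,T_i$ if $T_1|_Q \not\cong T_i|_Q$. A $0/1$ vector $x$ is identified with the edge set $\{e : x_e = 1\}$. *)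

theory Defs
  imports Complex_Main
begin

text \<open>A (phylogenetic) tree is a triple (V, E, lab): vertex set, set of undirected
  edges (2-element vertex sets) and a leaf labelling.\<close>
type_synonym ('v, 'x) ptree = "'v set \<times> 'v set set \<times> ('x \<Rightarrow> 'v)"

definition verts :: "('v, 'x) ptree \<Rightarrow> 'v set" where "verts T = fst T"
definition edges :: "('v, 'x) ptree \<Rightarrow> 'v set set" where "edges T = fst (snd T)"
definition lab :: "('v, 'x) ptree \<Rightarrow> 'x \<Rightarrow> 'v" where "lab T = snd (snd T)"

definition is_path :: "'v set set \<Rightarrow> 'v list \<Rightarrow> 'v \<Rightarrow> 'v \<Rightarrow> bool" where
  "is_path E p u v \<longleftrightarrow> p \<noteq> [] \<and> hd p = u \<and> last p = v \<and> distinct p \<and>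
     (\<forall>i. Suc i < length p \<longrightarrow> {p ! i, p ! Suc i} \<in> E)"

definition path_edges :: "'v list \<Rightarrow> 'v set set" where
  "path_edges p = {{p ! i, p ! Suc i} | i. Suc i < length p}"

definition has_cycle :: "'v set set \<Rightarrow> bool" where
  "has_cycle E \<longleftrightarrow> (\<exists>p. 3 \<le> length p \<and> distinct p \<and>
     (\<forall>i. Suc i < length p \<longrightarrow> {p ! i, p ! Suc i} \<in> E) \<and> {last p, hd p} \<in> E)"

definition is_tree :: "'v set \<Rightarrow> 'v set set \<Rightarrow> bool" where
  "is_tree V E \<longleftrightarrow> finite V \<and> V \<noteq> {} \<and>
     (\<forall>e\<in>E. \<exists>u v. e = {u, v} \<and> u \<noteq> v \<and> u \<in> V \<and> v \<in> V) \<and>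
     (\<forall>u\<in>V. \<forall>v\<in>V. \<exists>p. is_path E p u v) \<and> \<not> has_cycle E"

definition degree :: "'v set set \<Rightarrow> 'v \<Rightarrow> nat" where
  "degree E v = card {e \<in> E. v \<in> e}"

text \<open>Binary phylogenetic tree on X: a tree whose internal vertices have degree 3 and
  whose leaves (vertices of degree at most 1; degree 0 only for the one-vertex tree)
  are bijectively labelled by X.\<close>
definition phylo :: "'x set \<Rightarrow> ('v, 'x) ptree \<Rightarrow> bool" where
  "phylo X T \<longleftrightarrow> finite X \<and> is_tree (verts T) (edges T) \<and>
     inj_on (lab T) X \<and> lab T ` X = {v \<in> verts T. degree (edges T) v \<le> 1} \<and>
     (\<forall>v \<in> verts T. degree (edges T) v \<le> 1 \<or> degree (edges T) v = 3)"

definition span_edges :: "('v, 'x) ptree \<Rightarrow> 'x set \<Rightarrow> 'v set set" where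
  "span_edges T Y = \<Union>{path_edges p | p a b. a \<in> Y \<and> b \<in> Y \<and>
      is_path (edges T) p (lab T a) (lab T b)}"

definition span_verts :: "('v, 'x) ptree \<Rightarrow> 'x set \<Rightarrow> 'v set" where
  "span_verts T Y = lab T ` Y \<union> \<Union>(span_edges T Y)"

text \<open>restricts T Y S: S is a phylogenetic tree on Y isomorphic to T|_Y, i.e. T[Y] is a
  subdivision of S: vertices of S are embedded by phi into T[Y] (fixing leaf labels),
  every edge of S becomes a path of T[Y] whose interior avoids the image of phi, these
  paths are internally disjoint and together cover all edges of T[Y]. (Suppressing the
  degree-2 vertices of T[Y] exactly undoes such a subdivision.)\<close>
definition restricts :: "('v, 'x) ptree \<Rightarrow> 'x set \<Rightarrow> (nat, 'x) ptree \<Rightarrow> bool" where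
  "restricts T Y S \<longleftrightarrow> phylo Y S \<and>
     (\<exists>(\<phi> :: nat \<Rightarrow> 'v) (P :: nat set \<Rightarrow> 'v list).
        inj_on \<phi> (verts S) \<and> \<phi> ` verts S \<subseteq> span_verts T Y \<and>
        (\<forall>y\<in>Y. \<phi> (lab S y) = lab T y) \<and>
        (\<forall>e\<in>edges S. \<exists>s s'. e = {s, s'} \<and> is_path (edges T) (P e) (\<phi> s) (\<phi> s') \<and>
            set (P e) \<inter> \<phi> ` verts S = \<phi> ` e) \<and>
        (\<forall>e\<in>edges S. \<forall>e'\<in>edges S. e \<noteq> e' \<longrightarrow> set (P e) \<inter> set (P e') \<subseteq> \<phi> ` (e \<inter> e')) \<and>
        (\<Union>e\<in>edges S. path_edges (P e)) = span_edges T Y)"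

definition quartet_tree :: "'x \<Rightarrow> 'x \<Rightarrow> 'x \<Rightarrow> 'x \<Rightarrow> (nat, 'x) ptree" where
  "quartet_tree a b c d =
     ({0..5}, {{0,4}, {1,4}, {4,5}, {2,5}, {3,5}},
      (\<lambda>x. if x = a then 0 else if x = b then 1 else if x = c then 2 else 3))"

text \<open>T1|_Q and Ti|_Q are isomorphic iff some tree is (isomorphic to) both restrictions.\<close>
definition incompatible :: "('v, 'x) ptree \<Rightarrow> ('v, 'x) ptree \<Rightarrow> 'x set \<Rightarrow> bool" where
  "incompatible T1 Ti Q \<longleftrightarrow> \<not> (\<exists>S. restricts T1 Q S \<and> restricts Ti Q S)"

definition incomp_quartets :: "'x set \<Rightarrow> (nat \<Rightarrow> ('v, 'x) ptree) \<Rightarrow> nat \<Rightarrow> 'x set set" where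
  "incomp_quartets X T t =
     {Q. Q \<subseteq> X \<and> card Q = 4 \<and> (\<exists>i\<in>{2..t}. incompatible (T 1) (T i) Q)}"

definition Lset :: "('v, 'x) ptree \<Rightarrow> 'x set \<Rightarrow> 'v set set" where
  "Lset T Q = {e. \<exists>a b c d. Q = {a, b, c, d} \<and> restricts T Q (quartet_tree a b c d) \<and>
                  e \<in> span_edges T {a, b} \<union> span_edges T {c, d}}"

definition lp_feasible :: "('v, 'x) ptree \<Rightarrow> 'x set set \<Rightarrow> ('v set \<Rightarrow> real) \<Rightarrow> bool" where
  "lp_feasible T Qs x \<longleftrightarrow> (\<forall>e\<in>edges T. x e \<ge> 0) \<and> (\<forall>Q\<in>Qs. (\<Sum>e\<in>Lset T Q. x e) \<ge> 1)"

definition lp_optimal :: "('v, 'x) ptree \<Rightarrow> 'x set set \<Rightarrow> ('v set \<Rightarrow> real) \<Rightarrow> bool" where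
  "lp_optimal T Qs x \<longleftrightarrow> lp_feasible T Qs x \<and>
     (\<forall>y. lp_feasible T Qs y \<longrightarrow> (\<Sum>e\<in>edges T. x e) \<le> (\<Sum>e\<in>edges T. y e))"

definition lower_end :: "('v, 'x) ptree \<Rightarrow> 'v \<Rightarrow> 'v set \<Rightarrow> 'v" where
  "lower_end T r e = (THE v. \<exists>u. e = {u, v} \<and> u \<noteq> v \<and>
       (\<exists>p. is_path (edges T) p r v \<and> u \<in> set p))"

definition Dset :: "('v, 'x) ptree \<Rightarrow> 'v \<Rightarrow> 'v set set \<Rightarrow> 'v set \<Rightarrow> 'v set set" where
  "Dset T r E e = {f \<in> edges T.
      (\<exists>p. is_path (edges T) p r (lower_end T r f) \<and> lower_end T r e \<in> set p) \<and>
      (\<exists>q. is_path (edges T) q (lower_end T r e) (lower_end T r f) \<and> path_edges q \<inter> E = {})}"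

definition wt :: "('v, 'x) ptree \<Rightarrow> 'v \<Rightarrow> ('v set \<Rightarrow> real) \<Rightarrow> 'v set set \<Rightarrow> 'v set \<Rightarrow> real" where
  "wt T r x E e = (\<Sum>f\<in>Dset T r E e. x f)"

inductive round_reach :: "('v, 'x) ptree \<Rightarrow> 'v \<Rightarrow> ('v set \<Rightarrow> real) \<Rightarrow> 'v set set \<Rightarrow> bool"
  for T r x where
  start: "round_reach T r x {}"
| step: "round_reach T r x E \<Longrightarrow> e \<in> edges T \<Longrightarrow> wt T r x E e \<ge> 1/4 \<Longrightarrow>
         (\<forall>f\<in>Dset T r E e - {e}. wt T r x E f < 1/4) \<Longrightarrow> round_reach T r x (insert e E)"

end

theory Submission
  imports Defs
begin

(* Suppose L(Q) misses E.  The path of T_1 between two leaves a and b climbs from a to the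
  vertex where the root paths of a and b part and then descends to b, so every edge of L(Q)
  lies on a final segment, running inside L(Q), of the path from the root r to some leaf of Q.
  The topmost edge e of such a segment is not in E, and the segment hangs below e without
  meeting E, so it lies in D(e) and carries weight at most w(e) < 1/4.  The four leaves of Q
  thus give x(L(Q)) < 1, contradicting LP feasibility. *)

lemma sum_UN_le:
  fixes f :: "'a \<Rightarrow> 'b::ordered_comm_monoid_add"
  assumes "finite I" "\<And>i. i \<in> I \<Longrightarrow> finite (A i)" "\<And>i x. i \<in> I \<Longrightarrow> x \<in> A i \<Longrightarrow> 0 \<le> f x"
  shows "sum f (\<Union>i\<in>I. A i) \<le> (\<Sum>i\<in>I. sum f (A i))"
proof -
  have "(\<Union>i\<in>I. A i) = snd ` Sigma I A"
    by force
  then have "sum f (\<Union>i\<in>I. A i) \<le> sum (f \<circ> snd) (Sigma I A)"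
    using sum_image_le[of "Sigma I A" f snd] assms by auto
  also have "\<dots> = (\<Sum>i\<in>I. sum f (A i))"
    using assms(1,2) by (simp add: sum.Sigma split_def)
  finally show ?thesis .
qed

lemma is_path_iff_successively:
  "is_path E p u v \<longleftrightarrow> p \<noteq> [] \<and> hd p = u \<and> last p = v \<and> distinct p \<and>
     successively (\<lambda>a b. {a, b} \<in> E) p"
  unfolding is_path_def successively_conv_nth by blast

lemma path_edges_Nil [simp]: "path_edges [] = {}"
  and path_edges_singleton [simp]: "path_edges [x] = {}"
  by (auto simp: path_edges_def)

lemma path_edges_Cons_Cons [simp]:
  "path_edges (x # y # l) = insert {x, y} (path_edges (y # l))"
  unfolding path_edges_def by (auto simp: less_Suc_eq_0_disj) (metis nth_Cons_0 nth_Cons_Suc)+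

lemma path_edges_Cons:
  "path_edges (x # l) = (if l = [] then {} else insert {x, hd l} (path_edges l))"
  by (cases l) auto

lemma path_edges_append:
  "path_edges (a @ b) = path_edges a \<union> path_edges b \<union>
     (if a \<noteq> [] \<and> b \<noteq> [] then {{last a, hd b}} else {})"
  by (induction a rule: induct_list012) (auto simp: path_edges_Cons)

lemma path_edges_rev [simp]: "path_edges (rev l) = path_edges l"
  by (induction l rule: induct_list012) (auto simp: path_edges_append insert_commute)

lemma mem_path_edges_iff:
  "f \<in> path_edges l \<longleftrightarrow> (\<exists>a b. l = a @ b \<and> a \<noteq> [] \<and> b \<noteq> [] \<and> f = {last a, hd b})"
proof
  assume "f \<in> path_edges l"
  then show "\<exists>a b. l = a @ b \<and> a \<noteq> [] \<and> b \<noteq> [] \<and> f = {last a, hd b}"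
  proof (induction l rule: induct_list012)
    case (3 x y l)
    show ?case
    proof (cases "f = {x, y}")
      case True
      then show ?thesis by (intro exI[of _ "[x]"] exI[of _ "y # l"]) auto
    next
      case False
      with "3.prems" obtain a b where "y # l = a @ b" "a \<noteq> []" "b \<noteq> []" "f = {last a, hd b}"
        using "3.IH"(2) by auto
      then show ?thesis by (intro exI[of _ "x # a"] exI[of _ b]) auto
    qed
  qed auto
qed (auto simp: path_edges_append)

lemma path_edges_Cons_last_subset:
  "a \<noteq> [] \<Longrightarrow> path_edges (last a # b) \<subseteq> path_edges (a @ b)"
  by (cases b) (auto simp: path_edges_append)

lemma path_edges_subset_edges: "is_path E p u v \<Longrightarrow> path_edges p \<subseteq> E"
  unfolding is_path_def path_edges_def by auto

lemma is_path_infix: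
  "is_path E (a @ p @ b) u v \<Longrightarrow> p \<noteq> [] \<Longrightarrow> is_path E p (hd p) (last p)"
  by (auto simp: is_path_iff_successively successively_append_iff)

lemma is_path_suffix: "is_path E (a @ b) u v \<Longrightarrow> b \<noteq> [] \<Longrightarrow> is_path E b (hd b) v"
  by (auto simp: is_path_iff_successively successively_append_iff)

lemma is_path_rev: "is_path E p u v \<Longrightarrow> is_path E (rev p) v u"
  by (auto simp: is_path_iff_successively hd_rev last_rev insert_commute)

lemma is_path_append:
  "is_path E p u w \<Longrightarrow> is_path E (w # q) w v \<Longrightarrow> set p \<inter> set q = {} \<Longrightarrow>
   is_path E (p @ q) u v"
  by (cases q) (auto simp: is_path_iff_successively successively_append_iff)

lemma has_cycleI:
  "3 \<le> length c \<Longrightarrow> distinct c \<Longrightarrow> successively (\<lambda>a b. {a, b} \<in> E) c \<Longrightarrow>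
   {last c, hd c} \<in> E \<Longrightarrow> has_cycle E"
  unfolding has_cycle_def successively_conv_nth by blast

lemma has_cycle_if_forked_paths:
  assumes p: "is_path E (u # A @ [w]) u w" and q: "is_path E (u # C @ [w]) u w"
    and disjoint: "set A \<inter> set C = {}" and fork: "hd (A @ [w]) \<noteq> hd (C @ [w])"
  shows "has_cycle E"
proof (rule has_cycleI)
  let ?c = "(u # A) @ (w # rev C)"
  have C_path: "is_path E (rev (C @ [w])) w (hd (C @ [w]))"
    using is_path_infix[of E "[u]" "C @ [w]" "[]"] is_path_rev q by fastforce
  show "3 \<le> length ?c"
    using fork by (cases A; cases C) auto
  show "distinct ?c"
    using p q disjoint by (auto simp: is_path_def)
  show "successively (\<lambda>a b. {a, b} \<in> E) ?c"
  proof -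
    have "successively (\<lambda>a b. {a, b} \<in> E) ((u # A) @ [w])"
        and "successively (\<lambda>a b. {a, b} \<in> E) (w # rev C)"
      using p C_path by (auto simp: is_path_iff_successively)
    then show ?thesis
      unfolding successively_append_iff by simp
  qed
  show "{last ?c, hd ?c} \<in> E"
    using q by (cases C) (auto simp: is_path_iff_successively insert_commute)
qed

lemma is_path_unique:
  assumes acyclic: "\<not> has_cycle E" and p: "is_path E p u v" and q: "is_path E q u v"
  shows "p = q"
proof -
  obtain c p' q' where pc: "p = c @ p'" and qc: "q = c @ q'"
    and fork: "p' = [] \<or> q' = [] \<or> hd p' \<noteq> hd q'"
    using longest_common_prefix by blast
  have "c \<noteq> []"
    using p q fork pc qc by (cases p'; cases q') (auto simp: is_path_def)
  show ?thesis
  proof (cases "p' = [] \<or> q' = []")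
    case True
    then show ?thesis
      using p q pc qc \<open>c \<noteq> []\<close>
      by (auto simp: is_path_def) (metis disjoint_iff last_appendR last_in_set)+
  next
    case False
    then have "v \<in> set p'" "v \<in> set q'"
      using p q pc qc by (auto simp: is_path_def) (metis last_in_set)
    then obtain A z B where p': "p' = A @ z # B" and "z \<in> set q'" and A: "\<forall>y\<in>set A. y \<notin> set q'"
      using split_list_first_propE[of p' "\<lambda>y. y \<in> set q'"] by blast
    then obtain C D where q': "q' = C @ z # D"
      by (meson split_list)
    let ?w = "last c"
    have "p = butlast c @ (?w # A @ [z]) @ B" "q = butlast c @ (?w # C @ [z]) @ D"
      using \<open>c \<noteq> []\<close> pc qc p' q' by simp_all
    then have "is_path E (?w # A @ [z]) ?w z" "is_path E (?w # C @ [z]) ?w z"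
      using is_path_infix p q by fastforce+
    moreover have "set A \<inter> set C = {}"
      using A q' by auto
    moreover have "hd (A @ [z]) \<noteq> hd (C @ [z])"
      using fork False p' q' by (cases A; cases C) auto
    ultimately have "has_cycle E"
      by (rule has_cycle_if_forked_paths)
    with acyclic show ?thesis ..
  qed
qed

lemma path_edges_subset_span_edges:
  "a \<in> P \<Longrightarrow> b \<in> P \<Longrightarrow> is_path (edges T) p (lab T a) (lab T b) \<Longrightarrow> path_edges p \<subseteq> span_edges T P"
  unfolding span_edges_def by blast

lemma Lset_leaf_pathE:
  assumes "f \<in> Lset T Q"
  obtains a b p where "a \<in> Q" "b \<in> Q" "is_path (edges T) p (lab T a) (lab T b)"
    "f \<in> path_edges p" "path_edges p \<subseteq> Lset T Q"
proof -
  obtain a b c d where Q: "Q = {a, b, c, d}" and restr: "restricts T Q (quartet_tree a b c d)"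
    and f: "f \<in> span_edges T {a, b} \<union> span_edges T {c, d}"
    using assms unfolding Lset_def mem_Collect_eq by (elim exE conjE) (rule that)
  have spans: "span_edges T {a, b} \<union> span_edges T {c, d} \<subseteq> Lset T Q"
    unfolding Lset_def using Q restr by (intro subsetI CollectI exI conjI)
  obtain P where "P \<subseteq> Q" "f \<in> span_edges T P" "span_edges T P \<subseteq> Lset T Q"
  proof (cases "f \<in> span_edges T {a, b}")
    case True
    then show ?thesis
      using that[of "{a, b}"] spans Q by auto
  next
    case False
    then show ?thesis
      using that[of "{c, d}"] f spans Q by auto
  qed
  moreover from this(2) obtain a' b' p where "a' \<in> P" "b' \<in> P"
    "is_path (edges T) p (lab T a') (lab T b')" "f \<in> path_edges p"
    unfolding span_edges_def by blast
  ultimately show ?thesis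
    using that path_edges_subset_span_edges[of a' P b' T p] by blast
qed

definition root_path :: "'v set set \<Rightarrow> 'v \<Rightarrow> 'v \<Rightarrow> 'v list" where
  "root_path E r v = (THE p. is_path E p r v)"

(* The edges of the longest final segment of p all of whose edges lie in L. *)
definition tail_edges_in :: "'v set set \<Rightarrow> 'v list \<Rightarrow> 'v set set" where
  "tail_edges_in L p =
     {{last a, hd b} | a b. p = a @ b \<and> a \<noteq> [] \<and> b \<noteq> [] \<and> path_edges (last a # b) \<subseteq> L}"

lemma tail_edges_in_mono: "L \<subseteq> L' \<Longrightarrow> tail_edges_in L p \<subseteq> tail_edges_in L' p"
  unfolding tail_edges_in_def by blast

lemma path_edges_subset_tail_edges_in:
  assumes "c \<noteq> []"
  shows "path_edges (last c # d) \<subseteq> tail_edges_in (path_edges (last c # d)) (c @ d)"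
proof
  fix f assume "f \<in> path_edges (last c # d)"
  then obtain a b where ab: "last c # d = a @ b" "a \<noteq> []" "b \<noteq> []" "f = {last a, hd b}"
    by (auto simp: mem_path_edges_iff)
  have "c @ d = butlast c @ (last c # d)"
    using assms by simp
  then have "c @ d = (butlast c @ a) @ b"
    using ab by simp
  moreover have "path_edges (last a # b) \<subseteq> path_edges (last c # d)"
    using ab path_edges_Cons_last_subset by metis
  ultimately show "f \<in> tail_edges_in (path_edges (last c # d)) (c @ d)"
    unfolding tail_edges_in_def using ab by (intro CollectI exI[of _ "butlast c @ a"] exI[of _ b]) simp
qed

locale rooted_tree =
  fixes T :: "('v, 'x) ptree" and r :: 'v
  assumes tree: "is_tree (verts T) (edges T)" and root_in_verts: "r \<in> verts T"
begin

abbreviation "V \<equiv> verts T"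
abbreviation "Ed \<equiv> edges T"
abbreviation "\<pi> \<equiv> root_path Ed r"

lemma edge_endpoints:
  assumes "{u, v} \<in> Ed"
  shows "u \<in> V \<and> v \<in> V \<and> u \<noteq> v"
proof -
  have "\<forall>e\<in>Ed. \<exists>a b. e = {a, b} \<and> a \<noteq> b \<and> a \<in> V \<and> b \<in> V"
    using tree by (simp add: is_tree_def)
  then obtain a b where "{u, v} = {a, b}" "a \<noteq> b" "a \<in> V" "b \<in> V"
    using assms by meson
  then show ?thesis
    by (auto simp: doubleton_eq_iff)
qed

lemma finite_edges: "finite Ed"
proof (rule finite_subset)
  show "Ed \<subseteq> Pow V"
    using edge_endpoints tree by (auto simp: is_tree_def)
  show "finite (Pow V)"
    using tree by (simp add: is_tree_def)
qed

lemma no_cycle: "\<not> has_cycle Ed"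
  using tree by (simp add: is_tree_def)

lemma root_path_eqI: "is_path Ed p r v \<Longrightarrow> \<pi> v = p"
  unfolding root_path_def by (auto intro: the_equality is_path_unique[OF no_cycle])

lemma is_path_root_path:
  assumes "v \<in> V"
  shows "is_path Ed (\<pi> v) r v"
proof -
  obtain p where "is_path Ed p r v"
    using tree root_in_verts assms unfolding is_tree_def by blast
  then show ?thesis
    using root_path_eqI by simp
qed

lemma root_path_prefix:
  assumes "v \<in> V" "\<pi> v = a @ b" "a \<noteq> []"
  shows "\<pi> (last a) = a"
proof -
  have path: "is_path Ed ([] @ a @ b) r v"
    using is_path_root_path[OF assms(1)] assms(2) by simp
  then have "hd a = r"
    using assms(3) by (simp add: is_path_def)
  with is_path_infix[OF path assms(3)] have "is_path Ed a r (last a)"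
    by simp
  then show ?thesis
    by (rule root_path_eqI)
qed

lemma root_path_antisym:
  assumes "u \<in> V" "v \<in> V" "u \<in> set (\<pi> v)" "v \<in> set (\<pi> u)"
  shows "u = v"
proof -
  obtain a b where ab: "\<pi> v = a @ u # b"
    using assms(3) split_list by metis
  then have "\<pi> u = a @ [u]"
    using root_path_prefix[OF assms(2), of "a @ [u]" b] by simp
  moreover have "distinct (a @ u # b)" "last (a @ u # b) = v"
    using is_path_root_path[OF assms(2)] ab by (auto simp: is_path_def)
  ultimately show ?thesis
  proof (cases "b = []")
    case False
    then have "v \<in> set b"
      using \<open>last (a @ u # b) = v\<close> last_in_set by fastforce
    then show ?thesis
      using assms(4) \<open>\<pi> u = a @ [u]\<close> \<open>distinct (a @ u # b)\<close> by auto
  qed simp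
qed

lemma lower_end_eq:
  assumes e: "{u, v} \<in> Ed" and u: "u \<in> set (\<pi> v)"
  shows "lower_end T r {u, v} = v"
  unfolding lower_end_def
proof (rule the_equality)
  have "is_path Ed (\<pi> v) r v" "u \<noteq> v"
    using edge_endpoints[OF e] is_path_root_path by auto
  with u show "\<exists>u'. {u, v} = {u', v} \<and> u' \<noteq> v \<and> (\<exists>p. is_path Ed p r v \<and> u' \<in> set p)"
    by blast
next
  fix v' assume "\<exists>u'. {u, v} = {u', v'} \<and> u' \<noteq> v' \<and> (\<exists>p. is_path Ed p r v' \<and> u' \<in> set p)"
  then obtain u' p where uv: "{u, v} = {u', v'}" and "is_path Ed p r v'" "u' \<in> set p"
    by blast
  show "v' = v"
  proof (rule ccontr)
    assume "v' \<noteq> v"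
    with uv have "v' = u" "u' = v"
      by (auto simp: doubleton_eq_iff)
    then have "v \<in> set (\<pi> u)"
      using root_path_eqI[OF \<open>is_path Ed p r v'\<close>] \<open>u' \<in> set p\<close> by simp
    then show False
      using root_path_antisym[of u v] edge_endpoints[OF e] u by blast
  qed
qed

lemma root_path_split_edge:
  assumes "v \<in> V" "\<pi> v = a @ b" "a \<noteq> []" "b \<noteq> []"
  shows "{last a, hd b} \<in> Ed" and "\<pi> (hd b) = a @ [hd b]"
    and "lower_end T r {last a, hd b} = hd b"
proof -
  show edge: "{last a, hd b} \<in> Ed"
  proof (rule subsetD)
    show "path_edges (\<pi> v) \<subseteq> Ed"
      using path_edges_subset_edges[OF is_path_root_path[OF assms(1)]] .
    show "{last a, hd b} \<in> path_edges (\<pi> v)"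
      unfolding mem_path_edges_iff using assms(2-4) by (intro exI[of _ a] exI[of _ b]) simp
  qed
  show root_path: "\<pi> (hd b) = a @ [hd b]"
    using root_path_prefix[OF assms(1), of "a @ [hd b]" "tl b"] assms(2,4) by simp
  show "lower_end T r {last a, hd b} = hd b"
    using lower_end_eq[OF edge] root_path assms(3) by simp
qed

lemma tree_path_through_meet:
  assumes p: "is_path Ed p x y" and "x \<in> V" "y \<in> V"
  obtains c a b where "\<pi> x = c @ a" "\<pi> y = c @ b" "c \<noteq> []" "p = rev a @ last c # b"
proof -
  obtain c a b where x: "\<pi> x = c @ a" and y: "\<pi> y = c @ b"
    and fork: "a = [] \<or> b = [] \<or> hd a \<noteq> hd b"
    using longest_common_prefix by blast
  have px: "is_path Ed (c @ a) r x" and py: "is_path Ed (c @ b) r y"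
    using is_path_root_path[OF \<open>x \<in> V\<close>] is_path_root_path[OF \<open>y \<in> V\<close>] x y by simp_all
  have "c \<noteq> []"
    using fork px py by (cases a; cases b) (auto simp: is_path_def)
  have "set a \<inter> set b = {}"
  proof (rule ccontr)
    assume "set a \<inter> set b \<noteq> {}"
    then obtain z a1 a2 b1 b2 where a: "a = a1 @ z # a2" and b: "b = b1 @ z # b2"
      by (metis disjoint_iff split_list)
    have "\<pi> z = c @ a1 @ [z]" "\<pi> z = c @ b1 @ [z]"
      using root_path_prefix[OF \<open>x \<in> V\<close>, of "c @ a1 @ [z]" a2]
        root_path_prefix[OF \<open>y \<in> V\<close>, of "c @ b1 @ [z]" b2] x y a b by simp_all
    then have "a1 = b1"
      by simp
    then show False
      using fork a b by (cases a1) auto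
  qed
  let ?w = "last c"
  have reassoc: "butlast c @ ?w # d = c @ d" for d
    using \<open>c \<noteq> []\<close> by (cases c rule: rev_cases) auto
  have "is_path Ed (butlast c @ ?w # a) r x" "is_path Ed (butlast c @ ?w # b) r y"
    unfolding reassoc by (fact px py)+
  then have "is_path Ed (?w # a) ?w x" "is_path Ed (?w # b) ?w y"
    using is_path_suffix by fastforce+
  moreover from this(2) have "?w \<notin> set b"
    by (simp add: is_path_def)
  ultimately have "is_path Ed (rev a @ ?w # b) x y"
    using is_path_rev[of Ed "?w # a"] is_path_append[of Ed "rev a @ [?w]" x ?w b y]
      \<open>set a \<inter> set b = {}\<close> by auto
  then have "p = rev a @ ?w # b"
    using is_path_unique[OF no_cycle p] by simp
  with x y \<open>c \<noteq> []\<close> show ?thesis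
    by (rule that)
qed

lemma path_edges_subset_tail_edges_in_root_paths:
  assumes "is_path Ed p x y" "x \<in> V" "y \<in> V"
  shows "path_edges p \<subseteq> tail_edges_in (path_edges p) (\<pi> x) \<union> tail_edges_in (path_edges p) (\<pi> y)"
proof -
  obtain c a b where x: "\<pi> x = c @ a" and y: "\<pi> y = c @ b" and "c \<noteq> []"
    and p: "p = rev a @ last c # b"
    using tree_path_through_meet assms .
  have split: "path_edges p = path_edges (last c # a) \<union> path_edges (last c # b)"
    unfolding p path_edges_append by (auto simp: path_edges_Cons last_rev insert_commute)
  have "path_edges (last c # a) \<subseteq> tail_edges_in (path_edges (last c # a)) (\<pi> x)"
    using path_edges_subset_tail_edges_in[OF \<open>c \<noteq> []\<close>] x by simp
  also have "\<dots> \<subseteq> tail_edges_in (path_edges p) (\<pi> x)"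
    using split by (intro tail_edges_in_mono) simp
  finally have up: "path_edges (last c # a) \<subseteq> tail_edges_in (path_edges p) (\<pi> x)" .
  have "path_edges (last c # b) \<subseteq> tail_edges_in (path_edges (last c # b)) (\<pi> y)"
    using path_edges_subset_tail_edges_in[OF \<open>c \<noteq> []\<close>] y by simp
  also have "\<dots> \<subseteq> tail_edges_in (path_edges p) (\<pi> y)"
    using split by (intro tail_edges_in_mono) simp
  finally have down: "path_edges (last c # b) \<subseteq> tail_edges_in (path_edges p) (\<pi> y)" .
  show ?thesis
    using Un_mono[OF up down] split by simp
qed

lemma root_path_edge_in_Dset:
  assumes "v \<in> V" "\<pi> v = a @ m @ b" "a \<noteq> []" "b \<noteq> []"
    and avoids: "path_edges (m @ [hd b]) \<inter> E = {}"
  shows "{last (a @ m), hd b} \<in> Dset T r E {last a, hd (m @ b)}"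
proof -
  have upper: "lower_end T r {last a, hd (m @ b)} = hd (m @ b)"
    using root_path_split_edge(3)[of v a "m @ b"] assms(1-4) by simp
  have "\<pi> v = (a @ m) @ b" "a @ m \<noteq> []"
    using assms(2,3) by simp_all
  note lower = root_path_split_edge[OF assms(1) this assms(4)]
  have "hd b \<in> V"
    using lower(1) edge_endpoints by blast
  have "hd (m @ b) \<in> set (\<pi> (hd b))"
    using lower(2) assms(3) by (cases m) auto
  moreover have "is_path Ed (m @ [hd b]) (hd (m @ b)) (hd b)"
  proof -
    have "is_path Ed (a @ (m @ [hd b]) @ tl b) r v"
      using is_path_root_path[OF assms(1)] assms(2,4) by simp
    then show ?thesis
      using is_path_infix assms(4) by (cases m) fastforce+
  qed
  ultimately show ?thesis
    unfolding Dset_def using lower upper avoids is_path_root_path[OF \<open>hd b \<in> V\<close>] by auto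
qed

lemma sum_tail_edges_in_less:
  fixes x :: "'v set \<Rightarrow> real"
  assumes nonneg: "\<forall>e\<in>Ed. 0 \<le> x e" and light: "\<forall>e\<in>Ed - E. wt T r x E e < 1/4"
    and "L \<inter> E = {}" "v \<in> V"
  shows "sum x (tail_edges_in L (\<pi> v)) < 1/4"
proof (cases "tail_edges_in L (\<pi> v) = {}")
  case False
  let ?tail = "\<lambda>(a, b). \<pi> v = a @ b \<and> a \<noteq> [] \<and> b \<noteq> [] \<and> path_edges (last a # b) \<subseteq> L"
  from False obtain ab where "?tail ab"
    unfolding tail_edges_in_def by auto
  then obtain p0 where "?tail p0" and "\<forall>p. ?tail p \<longrightarrow> length (fst p0) \<le> length (fst p)"
    using ex_has_least_nat[of ?tail ab "\<lambda>p. length (fst p)"] by blast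
  then obtain a0 b0 where top: "?tail (a0, b0)"
    and shortest: "\<And>a b. ?tail (a, b) \<Longrightarrow> length a0 \<le> length a"
    by (cases p0) force
  let ?e = "{last a0, hd b0}"
  have "?e \<in> Ed"
    using root_path_split_edge(1) top \<open>v \<in> V\<close> by auto
  moreover have "?e \<in> L"
    using top by (cases b0) auto
  ultimately have "wt T r x E ?e < 1/4"
    using light \<open>L \<inter> E = {}\<close> by blast
  moreover have "tail_edges_in L (\<pi> v) \<subseteq> Dset T r E ?e"
  proof
    fix f assume "f \<in> tail_edges_in L (\<pi> v)"
    then obtain a b where ab: "?tail (a, b)" and f: "f = {last a, hd b}"
      unfolding tail_edges_in_def by auto
    obtain m where m: "a = a0 @ m" "b0 = m @ b"
      using append_eq_append_conv2[of a0 b0 a b] shortest[OF ab] top ab by auto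
    have "path_edges (m @ [hd b]) \<subseteq> path_edges (last a0 # b0)"
      using ab m by (cases b) (auto simp: path_edges_append path_edges_Cons)
    then have "path_edges (m @ [hd b]) \<inter> E = {}"
      using top \<open>L \<inter> E = {}\<close> by auto
    then show "f \<in> Dset T r E ?e"
      using root_path_edge_in_Dset[OF \<open>v \<in> V\<close>, of a0 m b] top ab m f by auto
  qed
  moreover have "finite (Dset T r E ?e)"
    using finite_edges by (rule rev_finite_subset) (auto simp: Dset_def)
  ultimately show ?thesis
    using sum_mono2[of "Dset T r E ?e" "tail_edges_in L (\<pi> v)" x] nonneg
    by (fastforce simp: wt_def Dset_def)
qed simp

lemma tail_edges_in_root_path_subset_edges: "v \<in> V \<Longrightarrow> tail_edges_in L (\<pi> v) \<subseteq> Ed"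
  unfolding tail_edges_in_def using root_path_split_edge(1) by blast

lemma sum_Lset_less:
  fixes x :: "'v set \<Rightarrow> real"
  assumes nonneg: "\<forall>e\<in>Ed. 0 \<le> x e" and light: "\<forall>e\<in>Ed - E. wt T r x E e < 1/4"
    and "Lset T Q \<inter> E = {}" and leaves: "lab T ` Q \<subseteq> V" and "finite Q" "Q \<noteq> {}"
  shows "sum x (Lset T Q) < card Q / 4"
proof -
  let ?tail = "\<lambda>q. tail_edges_in (Lset T Q) (\<pi> (lab T q))"
  have tail_edges: "?tail q \<subseteq> Ed" if "q \<in> Q" for q
    using tail_edges_in_root_path_subset_edges leaves that by blast
  have "Lset T Q \<subseteq> (\<Union>q\<in>Q. ?tail q)"
  proof
    fix f assume "f \<in> Lset T Q"
    then obtain a b p where "a \<in> Q" "b \<in> Q" "is_path Ed p (lab T a) (lab T b)"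
      and "f \<in> path_edges p" "path_edges p \<subseteq> Lset T Q"
      by (rule Lset_leaf_pathE)
    then have "f \<in> ?tail a \<union> ?tail b"
      using path_edges_subset_tail_edges_in_root_paths[of p "lab T a" "lab T b"] leaves
        tail_edges_in_mono[of "path_edges p" "Lset T Q"] by blast
    with \<open>a \<in> Q\<close> \<open>b \<in> Q\<close> show "f \<in> (\<Union>q\<in>Q. ?tail q)"
      by blast
  qed
  then have "sum x (Lset T Q) \<le> sum x (\<Union>q\<in>Q. ?tail q)"
    using tail_edges nonneg \<open>finite Q\<close> finite_edges by (intro sum_mono2) (auto intro: finite_subset)
  also have "\<dots> \<le> (\<Sum>q\<in>Q. sum x (?tail q))"
    using tail_edges nonneg \<open>finite Q\<close> finite_edges by (intro sum_UN_le) (auto intro: finite_subset)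
  also have "\<dots> < (\<Sum>q\<in>Q. 1/4)"
    using sum_tail_edges_in_less[OF nonneg light \<open>Lset T Q \<inter> E = {}\<close>] leaves \<open>finite Q\<close> \<open>Q \<noteq> {}\<close>
    by (intro sum_strict_mono) auto
  also have "\<dots> = card Q / 4"
    by simp
  finally show ?thesis .
qed

end

theorem lemma5:
  fixes T :: "nat \<Rightarrow> ('v, 'x) ptree" and X :: "'x set" and t :: nat
    and \<rho> :: 'x and xt :: "'v set \<Rightarrow> real" and E :: "'v set set"
  assumes "t \<ge> 1"
    and "\<forall>i\<in>{1..t}. phylo X (T i)"
    and "lp_optimal (T 1) (incomp_quartets X T t) xt"
    and "\<rho> \<in> X"
    and "round_reach (T 1) (lab (T 1) \<rho>) xt E"
    and "\<forall>e \<in> edges (T 1) - E. wt (T 1) (lab (T 1) \<rho>) xt E e < 1/4"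
  shows "\<forall>Q \<in> incomp_quartets X T t. Lset (T 1) Q \<inter> E \<noteq> {}"
proof (intro ballI notI)
  fix Q assume Q: "Q \<in> incomp_quartets X T t" and avoids: "Lset (T 1) Q \<inter> E = {}"
  have "phylo X (T 1)"
    using assms(1,2) by simp
  then have tree: "is_tree (verts (T 1)) (edges (T 1))" and leaves: "lab (T 1) ` X \<subseteq> verts (T 1)"
    unfolding phylo_def by auto
  interpret rooted_tree "T 1" "lab (T 1) \<rho>"
    using tree leaves assms(4) by unfold_locales auto
  have "Q \<subseteq> X" "card Q = 4"
    using Q by (auto simp: incomp_quartets_def)
  have feasible: "lp_feasible (T 1) (incomp_quartets X T t) xt"
    using assms(3) by (simp add: lp_optimal_def)
  moreover have "lab (T 1) ` Q \<subseteq> verts (T 1)"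
    using leaves \<open>Q \<subseteq> X\<close> by blast
  ultimately have "sum xt (Lset (T 1) Q) < card Q / 4"
    using assms(6) avoids \<open>card Q = 4\<close>
    by (intro sum_Lset_less) (auto simp: lp_feasible_def card_gt_0_iff[symmetric])
  moreover have "1 \<le> sum xt (Lset (T 1) Q)"
    using feasible Q by (simp add: lp_feasible_def)
  ultimately show False
    using \<open>card Q = 4\<close> by simp
qed

end
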